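(* Let $C\in\mathbb{R}^{n\times n}$ be symmetric, $\rho>0$, and let $(\tilde\sigma^k,\sigma^k,y^k)$ be generated by the ADMM-BM algorithm described in the context, with Assumption A holding. Then for all $k\ge1$ there exists an element $(g_{\tilde\sigma},g_\sigma)$ of the limiting subdifferential of $G_\rho$ at $(\tilde\sigma^{k+1},\sigma^{k+1})$ such that $$\left\|\begin{matrix}g_{\tilde\sigma}\\ g_\sigma\end{matrix}\right\|_F\le\Big(2\|C\|+\rho+\frac{\|C\|^2}{\rho}\Big)\left\|\begin{matrix}\tilde\sigma^{k+1}-\tilde\sigma^k\\ \sigma^{k+1}-\sigma^k\end{matrix}\right\|_F.$$
   Context: $\langle A,B\rangle=\mathrm{Tr}(A^\top B)$, $\|\cdot\|_F$ Frobenius norm (of the vertically stacked matrices), $\|C\|$ spectral norm. For $\sigma\in\mathbb{R}^{n\times r}$, $\sigma_i$ is its $i$-th row; $\mathcal{M}=\{\sigma:\|\sigma_i\|=1\ \forall i\}$; $\mathcal{I}_S$ the indicator function of $S$. $G_\rho(\tilde\sigma,\sigma)=\langle C,\tilde\sigma\tilde\sigma^\top\rangle+\frac\rho2\|\tilde\sigma-\sigma\|_F^2+\sum_i\mathcal{I}_{\{\|u\|=1\}}(\tilde\sigma_i)$. ADMM-BM with parameter $\rho$: choose $\tilde\sigma^0\in\mathcal{M}$, $\sigma^0=\tilde\sigma^0$, $y^0=C\tilde\sigma^0$. For $k=0,1,\dots$: $\gamma^k=\sigma^k-\frac1\rho(y^k+C\sigma^k)$ with rows $\gamma_i^k$; $\tilde\sigma^{k+1}_i=\gamma_i^k/\|\gamma_i^k\|$;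 $\sigma^{k+1}=\tilde\sigma^{k+1}+\frac1\rho(y^k-C\tilde\sigma^{k+1})$; $y^{k+1}=y^k+\rho(\tilde\sigma^{k+1}-\sigma^{k+1})$. Assumption A: $\gamma_i^k\neq0$ for all $i,k$. *)

theory Defs
  imports "HOL-Analysis.Analysis"
begin

text \<open>Matrices sigma in R^(n x r) are elements of real^'r^'n: sigma $ i is the i-th row.
  The inner product on real^'r^'n is the Frobenius inner product, its norm the Frobenius
  norm; on a pair (A, B) the product norm is the Frobenius norm of the stacked matrix.\<close>

definition spec_norm :: "real^'n^'m \<Rightarrow> real" where
  "spec_norm C = onorm (\<lambda>x. C *v x)"

definition unit_rows :: "(real^'r^'n) set" where
  "unit_rows = {\<sigma>. \<forall>i. norm (\<sigma> $ i) = 1}"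

definition G_rho :: "real^'n^'n \<Rightarrow> real \<Rightarrow> (real^'r^'n) \<times> (real^'r^'n) \<Rightarrow> ereal" where
  "G_rho C \<rho> p = (if fst p \<in> unit_rows
      then ereal (inner C (fst p ** transpose (fst p)) + \<rho> / 2 * (norm (fst p - snd p))^2)
      else \<infinity>)"

text \<open>Frechet (regular) subdifferential: f(x) finite and
  liminf_{y -> x, y ~= x} (f y - f x - <v, y - x>) / ||y - x|| >= 0.\<close>
definition frechet_subdiff :: "('a::real_inner \<Rightarrow> ereal) \<Rightarrow> 'a \<Rightarrow> 'a set" where
  "frechet_subdiff f x = {v. \<bar>f x\<bar> \<noteq> \<infinity> \<and>
      (\<forall>\<epsilon>>0. \<exists>\<delta>>0. \<forall>y. norm (y - x) < \<delta> \<longrightarrow>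
          f y \<ge> f x + ereal (inner v (y - x) - \<epsilon> * norm (y - x)))}"

definition limiting_subdiff :: "('a::real_inner \<Rightarrow> ereal) \<Rightarrow> 'a \<Rightarrow> 'a set" where
  "limiting_subdiff f x = {v. \<exists>xs vs. xs \<longlonglongrightarrow> x \<and> (\<lambda>k. f (xs k)) \<longlonglongrightarrow> f x \<and>
      vs \<longlonglongrightarrow> v \<and> (\<forall>k. vs k \<in> frechet_subdiff f (xs k))}"

definition admm_gamma :: "real^'n^'n \<Rightarrow> real \<Rightarrow> real^'r^'n \<Rightarrow> real^'r^'n \<Rightarrow> real^'r^'n" where
  "admm_gamma C \<rho> s y = s - (1 / \<rho>) *\<^sub>R (y + C ** s)"

end

theory Submission
  imports Defs
begin

text \<open>Since the dual variable always equals y = C st, the residual \<rho> (\<gamma> - st') of the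
  row normalisation st' of \<gamma> has rows that are multiples of the rows of st', i.e. it is a normal
  vector of the product of unit spheres. Hence (2 C st' + \<rho> (st' - s') + \<rho> (\<gamma> - st'), \<rho> (s' - st'))
  is a proximal, hence Frechet, hence limiting subgradient of G_rho at the new iterate
  (st', s'). The update equations rewrite it as
  (C \<Delta>st + C^2 \<Delta>st / \<rho> + C \<Delta>s - \<rho> \<Delta>s, - C \<Delta>st), where \<Delta> denotes the difference of
  consecutive iterates, and the triangle inequality together with
  norm (C ** X) \<le> spec_norm C * norm X bounds its norm by
  (2 spec_norm C + \<rho> + (spec_norm C)^2 / \<rho>) norm (\<Delta>st, \<Delta>s).\<close>

lemma matrix_diff_ldistrib: "A ** (B - C) = A ** B - A ** C"
  for A :: "'a::ring_1^'n^'m"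
  by (simp add: matrix_matrix_mult_def vec_eq_iff sum_subtractf algebra_simps)

lemma matrix_scaleR_ldistrib: "A ** (c *\<^sub>R B) = c *\<^sub>R (A ** B)"
  for A :: "real^'n^'m"
  by (simp add: matrix_matrix_mult_def vec_eq_iff sum_distrib_left mult_ac)

lemma column_matrix_mult: "column j (A ** B) = A *v column j B"
  by (simp add: column_def matrix_matrix_mult_def matrix_vector_mult_def vec_eq_iff)

lemma power2_norm_eq_sum_columns: "(norm A)\<^sup>2 = (\<Sum>j\<in>UNIV. (norm (column j A))\<^sup>2)"
  for A :: "real^'r^'m"
proof -
  have "(norm A)\<^sup>2 = (\<Sum>i\<in>UNIV. \<Sum>j\<in>UNIV. A$i$j * A$i$j)"
    by (simp add: power2_norm_eq_inner inner_vec_def)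
  also have "\<dots> = (\<Sum>j\<in>UNIV. \<Sum>i\<in>UNIV. A$i$j * A$i$j)"
    by (rule sum.swap)
  finally show ?thesis
    by (simp add: power2_norm_eq_inner inner_vec_def column_def)
qed

lemma spec_norm_nonneg: "0 \<le> spec_norm C"
  unfolding spec_norm_def by (rule onorm_pos_le) simp

lemma norm_matrix_mult_le: "norm (C ** X) \<le> spec_norm C * norm X"
  for C :: "real^'n^'m" and X :: "real^'r^'n"
proof -
  have column_le: "norm (C *v column j X) \<le> spec_norm C * norm (column j X)" for j
    unfolding spec_norm_def by (rule onorm) simp
  have "(norm (C ** X))\<^sup>2 = (\<Sum>j\<in>UNIV. (norm (C *v column j X))\<^sup>2)"
    by (simp add: power2_norm_eq_sum_columns[of "C ** X"] column_matrix_mult)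
  also have "\<dots> \<le> (\<Sum>j\<in>UNIV. (spec_norm C * norm (column j X))\<^sup>2)"
    by (intro sum_mono power_mono column_le) simp
  also have "\<dots> = (spec_norm C * norm X)\<^sup>2"
    by (simp add: power_mult_distrib sum_distrib_left power2_norm_eq_sum_columns[of X])
  finally show ?thesis
    by (rule power2_le_imp_le) (simp add: spec_norm_nonneg)
qed

lemma inner_matrix_mult_left: "inner (A ** X) Y = inner X (transpose A ** Y)"
  for A :: "real^'n^'m" and X :: "real^'r^'n"
proof -
  have "inner (A ** X) Y = (\<Sum>i\<in>UNIV. \<Sum>k\<in>UNIV. \<Sum>j\<in>UNIV. A$i$j * X$j$k * Y$i$k)"
    by (simp add: inner_vec_def matrix_matrix_mult_def sum_distrib_right)
  also have "\<dots> = (\<Sum>k\<in>UNIV. \<Sum>i\<in>UNIV. \<Sum>j\<in>UNIV. A$i$j * X$j$k * Y$i$k)"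
    by (rule sum.swap)
  also have "\<dots> = (\<Sum>k\<in>UNIV. \<Sum>j\<in>UNIV. \<Sum>i\<in>UNIV. A$i$j * X$j$k * Y$i$k)"
    by (rule sum.cong[OF refl], rule sum.swap)
  also have "\<dots> = (\<Sum>j\<in>UNIV. \<Sum>k\<in>UNIV. \<Sum>i\<in>UNIV. A$i$j * X$j$k * Y$i$k)"
    by (rule sum.swap)
  also have "\<dots> = inner X (transpose A ** Y)"
    by (simp add: inner_vec_def matrix_matrix_mult_def transpose_def sum_distrib_left mult_ac)
  finally show ?thesis .
qed

lemma inner_matrix_mult_transpose: "inner C (A ** transpose B) = inner (C ** B) A"
  for C :: "real^'n^'m" and A :: "real^'r^'m"
proof -
  have "inner C (A ** transpose B) = (\<Sum>i\<in>UNIV. \<Sum>j\<in>UNIV. \<Sum>k\<in>UNIV. C$i$j * A$i$k * B$j$k)"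
    by (simp add: inner_vec_def matrix_matrix_mult_def transpose_def sum_distrib_left mult_ac)
  also have "\<dots> = (\<Sum>i\<in>UNIV. \<Sum>k\<in>UNIV. \<Sum>j\<in>UNIV. C$i$j * A$i$k * B$j$k)"
    by (rule sum.cong[OF refl], rule sum.swap)
  also have "\<dots> = inner (C ** B) A"
    by (simp add: inner_vec_def matrix_matrix_mult_def sum_distrib_left sum_distrib_right mult_ac)
  finally show ?thesis .
qed

lemma inner_matrix_mult_ge: "- spec_norm C * (norm X)\<^sup>2 \<le> inner (C ** X) X"
  for C :: "real^'n^'n" and X :: "real^'r^'n"
proof -
  have "\<bar>inner (C ** X) X\<bar> \<le> norm (C ** X) * norm X"
    by (rule Cauchy_Schwarz_ineq2)
  also have "\<dots> \<le> spec_norm C * norm X * norm X"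
    by (intro mult_right_mono norm_matrix_mult_le) simp
  finally show ?thesis
    by (simp add: power2_eq_square)
qed

lemma inner_quadratic_form_expand:
  fixes C :: "real^'n^'n" and P D :: "real^'r^'n"
  assumes "transpose C = C"
  shows "inner C ((P + D) ** transpose (P + D))
    = inner C (P ** transpose P) + 2 * inner (C ** P) D + inner (C ** D) D"
proof -
  have "inner (C ** D) P = inner (C ** P) D"
    using inner_matrix_mult_left[of C D P] assms by (simp add: inner_commute)
  then show ?thesis
    by (simp add: inner_matrix_mult_transpose matrix_add_ldistrib inner_add)
qed

lemma inner_unit_diff:
  fixes p a :: "'a::real_inner"
  assumes "norm p = 1" and "norm a = 1"
  shows "inner p (a - p) = - (norm (a - p))\<^sup>2 / 2"
proof -
  have "inner p p = 1" "inner a a = 1"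
    using assms by (simp_all add: power2_norm_eq_inner[symmetric])
  then show ?thesis
    by (simp add: power2_norm_eq_inner inner_diff inner_commute)
qed

lemma inner_row_normal_le:
  fixes P A N :: "real^'r^'n" and lam :: "'n \<Rightarrow> real"
  assumes "P \<in> unit_rows" and "A \<in> unit_rows" and N: "\<And>i. N $ i = lam i *\<^sub>R P $ i"
  shows "inner N (A - P) \<le> (\<Sum>i\<in>UNIV. \<bar>lam i\<bar>) * (norm (A - P))\<^sup>2"
proof -
  have row: "lam i * inner (P $ i) ((A - P) $ i) \<le> \<bar>lam i\<bar> * (norm (A - P))\<^sup>2" for i
  proof -
    have "lam i * inner (P $ i) ((A - P) $ i) = - lam i * (norm ((A - P) $ i))\<^sup>2 / 2"
      using assms(1,2) by (simp add: unit_rows_def inner_unit_diff)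
    also have "\<dots> \<le> \<bar>lam i\<bar> * (norm ((A - P) $ i))\<^sup>2"
      using mult_right_mono[of "- lam i / 2" "\<bar>lam i\<bar>" "(norm ((A - P) $ i))\<^sup>2"] by simp
    also have "\<dots> \<le> \<bar>lam i\<bar> * (norm (A - P))\<^sup>2"
      using Finite_Cartesian_Product.norm_nth_le[where x = "A - P" and i = i]
      by (intro mult_left_mono power_mono) simp_all
    finally show ?thesis .
  qed
  have "inner N (A - P) = (\<Sum>i\<in>UNIV. lam i * inner (P $ i) ((A - P) $ i))"
    by (simp add: inner_vec_def N sum_distrib_left mult.assoc)
  also have "\<dots> \<le> (\<Sum>i\<in>UNIV. \<bar>lam i\<bar>) * (norm (A - P))\<^sup>2"
    unfolding sum_distrib_right by (intro sum_mono row)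
  finally show ?thesis .
qed

lemma frechet_subdiff_if_quadratic_minorant:
  fixes f :: "'a::real_inner \<Rightarrow> ereal"
  assumes "\<bar>f x\<bar> \<noteq> \<infinity>"
    and minorant: "\<And>y. f x + ereal (inner v (y - x) - K * (norm (y - x))\<^sup>2) \<le> f y"
  shows "v \<in> frechet_subdiff f x"
  unfolding frechet_subdiff_def
proof (intro CollectI conjI allI impI)
  fix \<epsilon> :: real
  assume "\<epsilon> > 0"
  define \<delta> where "\<delta> = \<epsilon> / (\<bar>K\<bar> + 1)"
  have "f x + ereal (inner v (y - x) - \<epsilon> * norm (y - x)) \<le> f y"
    if close: "norm (y - x) < \<delta>" for y
  proof -
    have "K * (norm (y - x))\<^sup>2 \<le> (\<bar>K\<bar> + 1) * norm (y - x) * norm (y - x)"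
      using mult_right_mono[of K "\<bar>K\<bar> + 1" "norm (y - x) * norm (y - x)"]
      by (simp add: power2_eq_square mult.assoc)
    also have "\<dots> \<le> (\<bar>K\<bar> + 1) * \<delta> * norm (y - x)"
      using close by (intro mult_right_mono mult_left_mono) simp_all
    also have "\<dots> = \<epsilon> * norm (y - x)"
      by (simp add: \<delta>_def)
    finally have "K * (norm (y - x))\<^sup>2 \<le> \<epsilon> * norm (y - x)" .
    then have "f x + ereal (inner v (y - x) - \<epsilon> * norm (y - x))
        \<le> f x + ereal (inner v (y - x) - K * (norm (y - x))\<^sup>2)"
      by (intro add_left_mono) simp
    also have "\<dots> \<le> f y"
      by (rule minorant)
    finally show ?thesis .
  qed
  moreover have "\<delta> > 0"
    using \<open>\<epsilon> > 0\<close> by (simp add: \<delta>_def add_pos_nonneg)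
  ultimately show "\<exists>\<delta>>0. \<forall>y. norm (y - x) < \<delta> \<longrightarrow>
      f x + ereal (inner v (y - x) - \<epsilon> * norm (y - x)) \<le> f y"
    by blast
qed (fact assms)

lemma frechet_subdiff_subset_limiting_subdiff: "frechet_subdiff f x \<subseteq> limiting_subdiff f x"
proof
  fix v
  assume "v \<in> frechet_subdiff f x"
  then show "v \<in> limiting_subdiff f x"
    unfolding limiting_subdiff_def by (intro CollectI exI[of _ "\<lambda>_. x"] exI[of _ "\<lambda>_. v"]) simp
qed

lemma G_rho_quadratic_minorant:
  fixes C :: "real^'n^'n" and P S N :: "real^'r^'n" and lam :: "'n \<Rightarrow> real"
  assumes symC: "transpose C = C" and "\<rho> \<ge> 0" and P: "P \<in> unit_rows"
    and N: "\<And>i. N $ i = lam i *\<^sub>R P $ i"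
  shows "G_rho C \<rho> (P, S)
      + ereal (inner (2 *\<^sub>R (C ** P) + \<rho> *\<^sub>R (P - S) + N, \<rho> *\<^sub>R (S - P)) (q - (P, S))
               - (spec_norm C + (\<Sum>i\<in>UNIV. \<bar>lam i\<bar>)) * (norm (q - (P, S)))\<^sup>2)
    \<le> G_rho C \<rho> q"
proof (cases q)
  case (Pair A B)
  show ?thesis
  proof (cases "A \<in> unit_rows")
    case False
    then show ?thesis
      by (simp add: Pair G_rho_def)
  next
    case True
    define D E where "D = A - P" and "E = B - S"
    have AB: "A = P + D" "B = S + E"
      by (simp_all add: D_def E_def)
    have expand: "inner C (A ** transpose A) + \<rho> / 2 * (norm (A - B))\<^sup>2
        = inner C (P ** transpose P) + \<rho> / 2 * (norm (P - S))\<^sup>2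
          + inner (2 *\<^sub>R (C ** P) + \<rho> *\<^sub>R (P - S) + N, \<rho> *\<^sub>R (S - P)) (D, E)
          + (inner (C ** D) D - inner N D + \<rho> / 2 * (norm (D - E))\<^sup>2)"
      unfolding AB using inner_quadratic_form_expand[OF symC, of P D]
      by (simp add: power2_norm_eq_inner inner_add inner_diff inner_commute algebra_simps)
    have sq: "(norm D)\<^sup>2 \<le> (norm (D, E))\<^sup>2"
      by (simp add: norm_Pair)
    have K0: "0 \<le> spec_norm C + (\<Sum>i\<in>UNIV. \<bar>lam i\<bar>)"
      by (simp add: spec_norm_nonneg sum_nonneg)
    have "- (spec_norm C + (\<Sum>i\<in>UNIV. \<bar>lam i\<bar>)) * (norm (D, E))\<^sup>2
        \<le> - (spec_norm C + (\<Sum>i\<in>UNIV. \<bar>lam i\<bar>)) * (norm D)\<^sup>2"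
      by (rule mult_left_mono_neg[OF sq]) (use K0 in simp)
    also have "\<dots> \<le> inner (C ** D) D - inner N D + \<rho> / 2 * (norm (D - E))\<^sup>2"
      using inner_matrix_mult_ge[of C D] inner_row_normal_le[OF P True N, folded D_def]
        mult_nonneg_nonneg[OF \<open>\<rho> \<ge> 0\<close> zero_le_power2[of "norm (D - E)"]]
      by (simp add: algebra_simps)
    finally have "- (spec_norm C + (\<Sum>i\<in>UNIV. \<bar>lam i\<bar>)) * (norm (D, E))\<^sup>2
        \<le> inner (C ** D) D - inner N D + \<rho> / 2 * (norm (D - E))\<^sup>2" .
    moreover have "q - (P, S) = (D, E)"
      by (simp add: Pair D_def E_def)
    ultimately show ?thesis
      using expand by (simp add: Pair G_rho_def P True algebra_simps)
  qed
qed

lemma G_rho_frechet_subgradient: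
  fixes C :: "real^'n^'n" and P S N :: "real^'r^'n" and lam :: "'n \<Rightarrow> real"
  assumes "transpose C = C" and "\<rho> \<ge> 0" and "P \<in> unit_rows"
    and "\<And>i. N $ i = lam i *\<^sub>R P $ i"
  shows "(2 *\<^sub>R (C ** P) + \<rho> *\<^sub>R (P - S) + N, \<rho> *\<^sub>R (S - P)) \<in> frechet_subdiff (G_rho C \<rho>) (P, S)"
  by (rule frechet_subdiff_if_quadratic_minorant[OF _ G_rho_quadratic_minorant[OF assms]])
    (simp add: G_rho_def assms(3))

lemma unit_rows_normalize:
  assumes "\<And>i. X $ i \<noteq> 0"
  shows "(\<chi> i. X $ i /\<^sub>R norm (X $ i)) \<in> unit_rows"
  using assms by (simp add: unit_rows_def)

lemma normalize_rows_residual: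
  "(X - (\<chi> i. X $ i /\<^sub>R norm (X $ i))) $ i = (norm (X $ i) - 1) *\<^sub>R (\<chi> i. X $ i /\<^sub>R norm (X $ i)) $ i"
  by (cases "X $ i = 0") (simp_all add: algebra_simps)

lemma G_rho_frechet_subgradient_normalize_rows:
  fixes C :: "real^'n^'n" and X P S :: "real^'r^'n"
  assumes "transpose C = C" and "\<rho> \<ge> 0" and "\<And>i. X $ i \<noteq> 0"
    and P: "P = (\<chi> i. X $ i /\<^sub>R norm (X $ i))"
  shows "(2 *\<^sub>R (C ** P) + \<rho> *\<^sub>R (P - S) + \<rho> *\<^sub>R (X - P), \<rho> *\<^sub>R (S - P))
    \<in> frechet_subdiff (G_rho C \<rho>) (P, S)"
proof (rule G_rho_frechet_subgradient[OF assms(1,2)])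
  show "P \<in> unit_rows"
    unfolding P using assms(3) by (rule unit_rows_normalize)
  show "(\<rho> *\<^sub>R (X - P)) $ i = (\<rho> * (norm (X $ i) - 1)) *\<^sub>R P $ i" for i
    using normalize_rows_residual[of X i] by (simp add: P[symmetric])
qed

lemma norm_Pair_le_mult:
  assumes "norm a \<le> c * norm x" and "norm b \<le> c * norm y" and "0 \<le> c"
  shows "norm (a, b) \<le> c * norm (x, y)"
proof -
  have "(norm (a, b))\<^sup>2 \<le> (c * norm x)\<^sup>2 + (c * norm y)\<^sup>2"
    using assms by (simp add: norm_Pair add_mono power_mono)
  also have "\<dots> = (c * norm (x, y))\<^sup>2"
    by (simp add: norm_Pair power_mult_distrib distrib_left)
  finally show ?thesis
    by (rule power2_le_imp_le) (simp add: \<open>0 \<le> c\<close>)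
qed

lemma admm_dual_eq:
  fixes C :: "real^'n^'n" and st s y :: "nat \<Rightarrow> real^'r^'n"
  assumes "\<rho> \<noteq> 0" and "y 0 = C ** st 0"
    and "\<And>k. s (Suc k) = st (Suc k) + (1 / \<rho>) *\<^sub>R (y k - C ** st (Suc k))"
    and "\<And>k. y (Suc k) = y k + \<rho> *\<^sub>R (st (Suc k) - s (Suc k))"
  shows "y k = C ** st k"
proof (cases k)
  case (Suc j)
  have "y (Suc j) = y j + \<rho> *\<^sub>R (- ((1 / \<rho>) *\<^sub>R (y j - C ** st (Suc j))))"
    using assms(3,4)[of j] by simp
  also have "\<dots> = C ** st (Suc j)"
    using \<open>\<rho> \<noteq> 0\<close> by (simp add: algebra_simps)
  finally show ?thesis
    using Suc by simp
qed (simp add: assms(2))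

lemma admm_subgradient_eq:
  fixes C :: "real^'n^'n" and P S st s :: "real^'r^'n"
  assumes "\<rho> \<noteq> 0" and S: "S = P + (1 / \<rho>) *\<^sub>R (C ** st - C ** P)"
  shows "(2 *\<^sub>R (C ** P) + \<rho> *\<^sub>R (P - S) + \<rho> *\<^sub>R (s - (1 / \<rho>) *\<^sub>R (C ** st + C ** s) - P),
          \<rho> *\<^sub>R (S - P))
    = (C ** (P - st) + (1 / \<rho>) *\<^sub>R (C ** (C ** (P - st))) + C ** (S - s) - \<rho> *\<^sub>R (S - s),
       - (C ** (P - st)))"
  using \<open>\<rho> \<noteq> 0\<close>
  by (simp add: S matrix_add_ldistrib matrix_diff_ldistrib matrix_scaleR_ldistrib
      algebra_simps scaleR_2)

lemma norm_admm_subgradient_le: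
  fixes C :: "real^'n^'n" and D E :: "real^'r^'n"
  assumes "\<rho> > 0"
  shows "norm (C ** D + (1 / \<rho>) *\<^sub>R (C ** (C ** D)) + C ** E - \<rho> *\<^sub>R E, - (C ** D))
    \<le> (2 * spec_norm C + \<rho> + (spec_norm C)\<^sup>2 / \<rho>) * norm (D, E)"
proof -
  let ?c = "spec_norm C" and ?M = "norm (D, E)"
  have D: "norm D \<le> ?M" and E: "norm E \<le> ?M"
    by (rule norm_fst_le, rule norm_snd_le)
  have CD: "norm (C ** D) \<le> ?c * ?M"
    using norm_matrix_mult_le[of C D] mult_left_mono[OF D spec_norm_nonneg[of C]] by linarith
  have CCD: "norm (C ** (C ** D)) \<le> ?c * (?c * ?M)"
    using norm_matrix_mult_le[of C "C ** D"] mult_left_mono[OF CD spec_norm_nonneg[of C]] by linarith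
  let ?A = "(C ** D + (1 / \<rho>) *\<^sub>R (C ** (C ** D)), 0::real^'r^'n)"
    and ?B = "(C ** E, - (C ** D))" and ?R = "(- (\<rho> *\<^sub>R E), 0::real^'r^'n)"
  have A: "norm ?A \<le> ?c * ?M + ?c\<^sup>2 / \<rho> * ?M"
  proof -
    have "norm (C ** D + (1 / \<rho>) *\<^sub>R (C ** (C ** D)))
        \<le> norm (C ** D) + (1 / \<rho>) * norm (C ** (C ** D))"
      using norm_triangle_ineq[of "C ** D" "(1 / \<rho>) *\<^sub>R (C ** (C ** D))"] \<open>\<rho> > 0\<close> by simp
    also have "\<dots> \<le> ?c * ?M + (1 / \<rho>) * (?c * (?c * ?M))"
      using CD CCD \<open>\<rho> > 0\<close> by (intro add_mono mult_left_mono) simp_all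
    finally show ?thesis
      by (simp add: norm_Pair power2_eq_square)
  qed
  have B: "norm ?B \<le> ?c * ?M"
    using norm_Pair_le_mult[OF norm_matrix_mult_le[of C E] norm_matrix_mult_le[of C D]]
    by (simp add: spec_norm_nonneg norm_Pair add.commute)
  have R: "norm ?R \<le> \<rho> * ?M"
    using E \<open>\<rho> > 0\<close> by (simp add: norm_Pair)
  have "(C ** D + (1 / \<rho>) *\<^sub>R (C ** (C ** D)) + C ** E - \<rho> *\<^sub>R E, - (C ** D)) = ?A + ?B + ?R"
    by simp
  also have "norm \<dots> \<le> norm ?A + norm ?B + norm ?R"
    by (intro norm_triangle_le add_right_mono norm_triangle_ineq)
  also have "\<dots> \<le> (?c * ?M + ?c\<^sup>2 / \<rho> * ?M) + ?c * ?M + \<rho> * ?M"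
    using A B R by (intro add_mono)
  also have "\<dots> = (2 * ?c + \<rho> + ?c\<^sup>2 / \<rho>) * ?M"
    by (simp add: algebra_simps)
  finally show ?thesis .
qed

theorem lemma7:
  fixes C :: "real^'n^'n" and \<rho> :: real
    and st s y :: "nat \<Rightarrow> real^'r^'n"
  assumes symC: "transpose C = C"
    and rho_pos: "\<rho> > 0"
    and init_M: "st 0 \<in> unit_rows"
    and init_s: "s 0 = st 0"
    and init_y: "y 0 = C ** st 0"
    and upd_st: "\<And>k. st (Suc k) =
        (\<chi> i. (admm_gamma C \<rho> (s k) (y k) $ i) /\<^sub>R norm (admm_gamma C \<rho> (s k) (y k) $ i))"
    and upd_s: "\<And>k. s (Suc k) = st (Suc k) + (1 / \<rho>) *\<^sub>R (y k - C ** st (Suc k))"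
    and upd_y: "\<And>k. y (Suc k) = y k + \<rho> *\<^sub>R (st (Suc k) - s (Suc k))"
    and assmA: "\<And>k i. admm_gamma C \<rho> (s k) (y k) $ i \<noteq> 0"
  shows "\<forall>k\<ge>1. \<exists>g. g \<in> limiting_subdiff (G_rho C \<rho>) (st (Suc k), s (Suc k)) \<and>
      norm g \<le> (2 * spec_norm C + \<rho> + (spec_norm C)^2 / \<rho>) *
               norm (st (Suc k) - st k, s (Suc k) - s k)"
proof (intro allI impI)
  fix k :: nat
  have "\<rho> \<noteq> 0"
    using rho_pos by simp
  have y: "y j = C ** st j" for j
    by (rule admm_dual_eq[OF \<open>\<rho> \<noteq> 0\<close> init_y upd_s upd_y])
  define \<gamma> where "\<gamma> = admm_gamma C \<rho> (s k) (y k)"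
  define P S where "P = st (Suc k)" and "S = s (Suc k)"
  define g where "g = (2 *\<^sub>R (C ** P) + \<rho> *\<^sub>R (P - S) + \<rho> *\<^sub>R (\<gamma> - P), \<rho> *\<^sub>R (S - P))"
  have "P = (\<chi> i. \<gamma> $ i /\<^sub>R norm (\<gamma> $ i))"
    by (simp add: P_def \<gamma>_def upd_st)
  then have "g \<in> frechet_subdiff (G_rho C \<rho>) (P, S)"
    unfolding g_def using symC rho_pos assmA
    by (intro G_rho_frechet_subgradient_normalize_rows) (simp_all add: \<gamma>_def)
  then have limiting: "g \<in> limiting_subdiff (G_rho C \<rho>) (P, S)"
    by (rule subsetD[OF frechet_subdiff_subset_limiting_subdiff])
  have bound: "norm g \<le> (2 * spec_norm C + \<rho> + (spec_norm C)\<^sup>2 / \<rho>) * norm (P - st k, S - s k)"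
  proof -
    have S: "S = P + (1 / \<rho>) *\<^sub>R (C ** st k - C ** P)"
      by (simp add: S_def P_def upd_s y)
    have "\<gamma> = s k - (1 / \<rho>) *\<^sub>R (C ** st k + C ** s k)"
      by (simp add: \<gamma>_def admm_gamma_def y)
    then have "g = (C ** (P - st k) + (1 / \<rho>) *\<^sub>R (C ** (C ** (P - st k))) + C ** (S - s k)
        - \<rho> *\<^sub>R (S - s k), - (C ** (P - st k)))"
      unfolding g_def by (simp only: admm_subgradient_eq[OF \<open>\<rho> \<noteq> 0\<close> S])
    then show ?thesis
      by (simp only: norm_admm_subgradient_le[OF rho_pos])
  qed
  show "\<exists>g. g \<in> limiting_subdiff (G_rho C \<rho>) (st (Suc k), s (Suc k)) \<and>
      norm g \<le> (2 * spec_norm C + \<rho> + (spec_norm C)^2 / \<rho>) *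
               norm (st (Suc k) - st k, s (Suc k) - s k)"
    using limiting bound unfolding P_def S_def by blast
qed

end
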